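(* Let $p$ be a prime and $a,b$ positive integers with $b>1$, and suppose $k=\frac{p^{ab}-1}{b(p^a-1)}$ is an integer and $u=b(p^a-1)$ is a primitive divisor of $p^{ab}-1$. Let $\omega$ be a primitive element of $\mathbb{F}_{p^{ab}}$; for $\alpha\in\mathbb{F}_{p^{ab}}$ write $\alpha=\sum_{i=0}^{b-1}c_i\omega^{ik}$ with $c_i\in\mathbb{F}_{p^a}$ and set $[\alpha]_i=c_{i-1}$ for $i=1,\ldots,b$. For $r\ge1$ define $$N_r=k^{r}\sum_{\substack{r_1+\cdots+r_b=r\\ r_i\ge0}} \frac{r!}{r_{1}!\cdots r_{b}!}\prod_{i=1}^b a_{i}(\alpha),\qquad a_{i}(\alpha)=\begin{cases}\frac{p^{a}-1}{p^{a}}\big((p^{a}-1)^{r_i-1}-(-1)^{r_i-1}\big) & \text{if } [\alpha]_i=0,\\[1mm] \frac{1}{p^{a}}\big((p^{a}-1)^{r_i}-(-1)^{r_i}\big) & \text{if } [\alpha]_i\neq 0.\end{cases}$$ Let $s\ge1$ and let $M_s$ be the number of $(x_1,\ldots,x_s)\in\mathbb{F}_{p^{ab}}^s$ with $x_1^k+\cdots+x_s^k=\alpha$. Then $$M_s=\begin{cases}\sum_{r=1}^{s}\binom{s}{r}N_r & \text{if }\alpha\neq0,\\[1mm] 1+\sum_{r=1}^{s}\binom{s}{r}N_r & \text{if }\alpha=0.\end{cases}$$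
   Context: A divisor $u$ of $p^m-1$ is primitive if $u\nmid p^h-1$ for all $1\le h<m$. Under the hypotheses, $\{1,\omega^k,\ldots,\omega^{(b-1)k}\}$ is a basis of $\mathbb{F}_{p^{ab}}$ over $\mathbb{F}_{p^a}$. *)

theory Defs
  imports Complex_Main "HOL-Computational_Algebra.Primes"
begin

definition primitive_divisor :: "nat \<Rightarrow> nat \<Rightarrow> nat \<Rightarrow> bool" where
  "primitive_divisor u p m \<longleftrightarrow> u dvd p ^ m - 1 \<and> (\<forall>h. 1 \<le> h \<and> h < m \<longrightarrow> \<not> u dvd p ^ h - 1)"

definition primitive_elem :: "'a::{finite,field} \<Rightarrow> bool" where
  "primitive_elem w \<longleftrightarrow> w \<noteq> 0 \<and> (\<forall>x::'a. x \<noteq> 0 \<longrightarrow> (\<exists>n::nat. x = w ^ n))"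

definition subfield_of_size :: "nat \<Rightarrow> 'a::field set" where
  "subfield_of_size q = {x. x ^ q = x}"

definition coords :: "nat \<Rightarrow> nat \<Rightarrow> nat \<Rightarrow> 'a::field \<Rightarrow> 'a \<Rightarrow> nat \<Rightarrow> 'a" where
  "coords q b k w \<alpha> = (THE c. (\<forall>j<b. c j \<in> subfield_of_size q) \<and> (\<forall>j\<ge>b. c j = 0)
      \<and> \<alpha> = (\<Sum>j<b. c j * w ^ (j * k)))"

definition bracket :: "nat \<Rightarrow> nat \<Rightarrow> nat \<Rightarrow> 'a::field \<Rightarrow> 'a \<Rightarrow> nat \<Rightarrow> 'a" where
  "bracket q b k w \<alpha> i = coords q b k w \<alpha> (i - 1)"

definition a_coef :: "nat \<Rightarrow> bool \<Rightarrow> nat \<Rightarrow> real" where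
  "a_coef q is_zero ri = (if is_zero
     then (real q - 1) / real q * ((real q - 1) powi (int ri - 1) - (-1) powi (int ri - 1))
     else 1 / real q * ((real q - 1) powi (int ri) - (-1) powi (int ri)))"

definition compositions :: "nat \<Rightarrow> nat \<Rightarrow> (nat \<Rightarrow> nat) set" where
  "compositions b r = {rs. (\<forall>i. i \<notin> {1..b} \<longrightarrow> rs i = 0) \<and> (\<Sum>i=1..b. rs i) = r}"

definition N_r :: "nat \<Rightarrow> nat \<Rightarrow> nat \<Rightarrow> 'a::field \<Rightarrow> 'a \<Rightarrow> nat \<Rightarrow> real" where
  "N_r q b k w \<alpha> r = real k ^ r * (\<Sum>rs\<in>compositions b r.
      fact r / (\<Prod>i=1..b. fact (rs i)) *
      (\<Prod>i=1..b. a_coef q (bracket q b k w \<alpha> i = 0) (rs i)))"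

end

theory Submission
  imports
    Defs
    "HOL-Number_Theory.Residues"
    "HOL-Library.Cardinality"
    "HOL-Library.Poly_Mapping"
    "HOL-Computational_Algebra.Polynomial"
begin

text \<open>
  Count solutions in the real group algebra of the additive group of the field: the number of
  solutions is the coefficient of \<open>\<alpha>\<close> in \<open>P ^ s\<close>, where \<open>P = \<Sum>\<^sub>x [x ^ k]\<close>.
  On the nonzero elements, \<open>x \<mapsto> x ^ k\<close> is \<open>k\<close>-to-one onto the powers \<open>\<omega> ^ (m k)\<close>,
  \<open>m < b (q - 1)\<close>, and writing \<open>m = j b + i\<close> these are exactly the products \<open>c \<omega> ^ (i k)\<close> with
  \<open>c\<close> a nonzero element of the subfield with \<open>q\<close> elements and \<open>i < b\<close>.
  Hence \<open>P = 1 + k (\<nu>\<^sub>1 + \<dots> + \<nu>\<^sub>b)\<close> with \<open>\<nu>\<^sub>i = \<Sum>\<^sub>c [c \<omega> ^ ((i - 1) k)]\<close>. Expanding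
  binomially and then multinomially leaves the powers \<open>\<nu>\<^sub>i ^ t\<close>, whose coefficient at
  \<open>c \<omega> ^ ((i - 1) k)\<close> is the number of ways to write \<open>c\<close> as a sum of \<open>t\<close> nonzero elements of the
  subfield, i.e. \<open>a_coef\<close>. The primitive divisor condition makes the conjugates
  \<open>\<omega> ^ (k q ^ i)\<close>, \<open>i < b\<close>, distinct, so \<open>1, \<omega> ^ k, \<dots>, \<omega> ^ ((b - 1) k)\<close> is a basis over the
  subfield and the coefficient of \<open>\<alpha>\<close> in a product of the \<open>\<nu>\<^sub>i ^ t\<close> factorises over the
  coordinates of \<open>\<alpha>\<close>.
\<close>

section \<open>Finite fields and primitive elements\<close>

lemma finite_field_power_card_minus_one:
  fixes x :: "'a::{finite,field}"
  assumes "x \<noteq> 0"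
  shows "x ^ (CARD('a) - 1) = 1"
proof -
  have "(\<Prod>y\<in>UNIV - {0}. x * y) = (\<Prod>y\<in>UNIV - {0}. y)"
    by (rule prod.reindex_bij_witness[of _ "\<lambda>y. y / x" "\<lambda>y. x * y"]) (use assms in auto)
  moreover have "(\<Prod>y\<in>UNIV - {0}. x * y) = x ^ (CARD('a) - 1) * (\<Prod>y\<in>UNIV - {0::'a}. y)"
    by (simp add: prod.distrib card_Diff_singleton)
  moreover have "(\<Prod>y\<in>UNIV - {0::'a}. y) \<noteq> 0"
    by simp
  ultimately show ?thesis
    by simp
qed

lemma CHAR_eq_if_card_eq_prime_power:
  assumes "prime p" and "CARD('a::{finite,field}) = p ^ n"
  shows "CHAR('a) = p"
proof -
  have "prime CHAR('a)"
    by (simp add: finite_imp_CHAR_pos prime_CHAR_semidom)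
  moreover have "CHAR('a) dvd p ^ n"
    using CHAR_dvd_CARD[where 'a='a] assms(2) by simp
  ultimately show ?thesis
    using assms(1) prime_dvd_power primes_dvd_imp_eq by blast
qed

lemma finite_field_card_gt_one: "CARD('a::{finite,field}) > 1"
proof -
  have "card {0, 1::'a} \<le> CARD('a)"
    by (rule card_mono) simp_all
  then show ?thesis
    by simp
qed

lemma primitive_elem_power_card_minus_one:
  fixes \<omega> :: "'a::{finite,field}"
  assumes "primitive_elem \<omega>"
  shows "\<omega> ^ (CARD('a) - 1) = 1"
proof -
  have "\<omega> \<noteq> 0"
    using assms by (simp add: primitive_elem_def)
  then show ?thesis
    by (rule finite_field_power_card_minus_one)
qed

lemma primitive_elem_power_mod:
  fixes \<omega> :: "'a::{finite,field}"
  assumes "primitive_elem \<omega>"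
  shows "\<omega> ^ (n mod (CARD('a) - 1)) = \<omega> ^ n"
proof -
  have "\<omega> ^ n = \<omega> ^ ((CARD('a) - 1) * (n div (CARD('a) - 1)) + n mod (CARD('a) - 1))"
    by simp
  also have "\<dots> = (\<omega> ^ (CARD('a) - 1)) ^ (n div (CARD('a) - 1)) * \<omega> ^ (n mod (CARD('a) - 1))"
    by (simp only: power_add power_mult)
  also have "\<dots> = \<omega> ^ (n mod (CARD('a) - 1))"
    by (simp only: primitive_elem_power_card_minus_one[OF assms] power_one mult_1)
  finally show ?thesis ..
qed

lemma primitive_elem_bij_betw:
  fixes \<omega> :: "'a::{finite,field}"
  assumes "primitive_elem \<omega>"
  shows "bij_betw (\<lambda>n. \<omega> ^ n) {..<CARD('a) - 1} (UNIV - {0})"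
proof -
  have "(\<lambda>n. \<omega> ^ n) ` {..<CARD('a) - 1} = UNIV - {0}"
  proof (intro equalityI subsetI)
    fix x :: 'a assume "x \<in> UNIV - {0}"
    then obtain n where "x = \<omega> ^ n"
      using assms by (auto simp: primitive_elem_def)
    moreover have "CARD('a) - 1 > 0"
      using finite_field_card_gt_one[where 'a='a] by simp
    ultimately show "x \<in> (\<lambda>n. \<omega> ^ n) ` {..<CARD('a) - 1}"
      using primitive_elem_power_mod[OF assms, of n] by (metis image_eqI lessThan_iff mod_less_divisor)
  next
    fix x assume "x \<in> (\<lambda>n. \<omega> ^ n) ` {..<CARD('a) - 1}"
    then show "x \<in> UNIV - {0}"
      using assms by (auto simp: primitive_elem_def)
  qed
  moreover from this have "card ((\<lambda>n. \<omega> ^ n) ` {..<CARD('a) - 1}) = CARD('a) - 1"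
    by (simp add: card_Diff_singleton)
  ultimately show ?thesis
    by (simp add: bij_betw_def eq_card_imp_inj_on)
qed

lemma primitive_elem_power_eq_iff:
  fixes \<omega> :: "'a::{finite,field}"
  assumes "primitive_elem \<omega>"
  shows "\<omega> ^ n = \<omega> ^ m \<longleftrightarrow> n mod (CARD('a) - 1) = m mod (CARD('a) - 1)"
proof -
  have pos: "CARD('a) - 1 > 0"
    using finite_field_card_gt_one[where 'a='a] by simp
  have "\<omega> ^ (n mod (CARD('a) - 1)) = \<omega> ^ (m mod (CARD('a) - 1))
      \<longleftrightarrow> n mod (CARD('a) - 1) = m mod (CARD('a) - 1)"
    using primitive_elem_bij_betw[OF assms] pos by (auto simp: bij_betw_def dest: inj_onD)
  then show ?thesis
    by (simp only: primitive_elem_power_mod[OF assms])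
qed

section \<open>The subfield with \<open>q\<close> elements\<close>

lemma subfield_of_size_iff: "x \<in> subfield_of_size q \<longleftrightarrow> x ^ q = x"
  by (simp add: subfield_of_size_def)

lemma subfield_of_size_zero: "q > 0 \<Longrightarrow> 0 \<in> subfield_of_size q"
  by (simp add: subfield_of_size_iff)

lemma subfield_of_size_power_power:
  assumes "x \<in> subfield_of_size q"
  shows "x ^ (q ^ n) = x"
proof (induction n)
  case (Suc n)
  have "x ^ (q ^ Suc n) = (x ^ q) ^ (q ^ n)"
    by (simp add: power_mult[symmetric] mult.commute)
  then show ?case
    using assms Suc by (simp add: subfield_of_size_iff)
qed simp

lemma subfield_of_size_diff:
  fixes x y :: "'a::field"
  assumes "prime CHAR('a)" and "q = CHAR('a) ^ e"
    and "x \<in> subfield_of_size q" and "y \<in> subfield_of_size q"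
  shows "x - y \<in> subfield_of_size q"
proof -
  have "x ^ q = (x - y) ^ q + y ^ q"
    using freshmans_dream'[OF assms(1,2), of "x - y" y] by simp
  then show ?thesis
    using assms(3,4) by (simp add: subfield_of_size_iff algebra_simps)
qed

lemma primitive_elem_power_in_subfield_iff:
  fixes \<omega> :: "'a::{finite,field}"
  assumes "primitive_elem \<omega>" and "q > 1" and "CARD('a) - 1 = m * (q - 1)"
  shows "\<omega> ^ n \<in> subfield_of_size q \<longleftrightarrow> m dvd n"
proof -
  have "\<omega> \<noteq> 0"
    using assms(1) by (simp add: primitive_elem_def)
  have "(\<omega> ^ n) ^ q = (\<omega> ^ n) ^ (q - 1) * \<omega> ^ n"
    using power_minus_mult[of q "\<omega> ^ n"] assms(2) by simp
  then have "\<omega> ^ n \<in> subfield_of_size q \<longleftrightarrow> \<omega> ^ (n * (q - 1)) = \<omega> ^ 0"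
    using \<open>\<omega> \<noteq> 0\<close> by (simp add: subfield_of_size_iff power_mult)
  also have "\<dots> \<longleftrightarrow> (CARD('a) - 1) dvd n * (q - 1)"
    using primitive_elem_power_eq_iff[OF assms(1), of "n * (q - 1)" 0] by (simp add: dvd_eq_mod_eq_0)
  also have "\<dots> \<longleftrightarrow> m dvd n"
    using assms(2,3) by simp
  finally show ?thesis .
qed

lemma subfield_of_size_nonzero_bij_betw:
  fixes \<omega> :: "'a::{finite,field}"
  assumes "primitive_elem \<omega>" and "q > 1" and "(q - 1) dvd (CARD('a) - 1)"
  defines "m \<equiv> (CARD('a) - 1) div (q - 1)"
  shows "bij_betw (\<lambda>j. \<omega> ^ (m * j)) {..<q - 1} (subfield_of_size q - {0})"
proof -
  let ?N = "CARD('a) - 1" and ?D = "{n. n < CARD('a) - 1 \<and> m dvd n}"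
  have N_eq: "?N = m * (q - 1)"
    using assms(3) by (simp add: m_def)
  note in_subfield_iff = primitive_elem_power_in_subfield_iff[OF assms(1,2) N_eq]
  have m_pos: "m > 0"
    using N_eq finite_field_card_gt_one[where 'a='a] by (cases m) auto
  have bij_N: "bij_betw (\<lambda>n. \<omega> ^ n) {..<?N} (UNIV - {0})"
    by (rule primitive_elem_bij_betw[OF assms(1)])
  have "subfield_of_size q - {0} = (\<lambda>n. \<omega> ^ n) ` ?D"
  proof (intro equalityI subsetI)
    fix x :: 'a assume x: "x \<in> subfield_of_size q - {0}"
    then have "x \<in> (\<lambda>n. \<omega> ^ n) ` {..<?N}"
      using bij_N by (simp add: bij_betw_def)
    with x show "x \<in> (\<lambda>n. \<omega> ^ n) ` ?D"
      using in_subfield_iff by auto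
  next
    fix x assume "x \<in> (\<lambda>n. \<omega> ^ n) ` ?D"
    then show "x \<in> subfield_of_size q - {0}"
      using in_subfield_iff assms(1) by (auto simp: primitive_elem_def)
  qed
  moreover have "bij_betw (\<lambda>n. \<omega> ^ n) ?D ((\<lambda>n. \<omega> ^ n) ` ?D)"
    using bij_N by (auto intro: bij_betw_subset)
  moreover have "bij_betw (\<lambda>j. m * j) {..<q - 1} ?D"
    using N_eq m_pos by (auto simp: bij_betw_def inj_on_def elim!: dvdE)
  ultimately show ?thesis
    by (auto dest: bij_betw_trans simp: comp_def)
qed

lemma card_subfield_of_size:
  fixes \<omega> :: "'a::{finite,field}"
  assumes "primitive_elem \<omega>" and "q > 1" and "(q - 1) dvd (CARD('a) - 1)"
  shows "card (subfield_of_size q :: 'a set) = q"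
proof -
  have "card (subfield_of_size q - {0::'a}) = q - 1"
    using bij_betw_same_card[OF subfield_of_size_nonzero_bij_betw[OF assms]] by simp
  moreover have "card (subfield_of_size q :: 'a set) = Suc (card (subfield_of_size q - {0::'a}))"
    using subfield_of_size_zero[of q] assms(2) by (intro card.remove) simp_all
  ultimately show ?thesis
    using assms(2) by simp
qed

lemma coeffs_eq_zero_if_conjugates_distinct:
  fixes \<theta> :: "'a::field"
  assumes "prime CHAR('a)" and "q = CHAR('a) ^ e"
    and "inj_on (\<lambda>i. \<theta> ^ (q ^ i)) {..<n}"
    and "\<forall>j<n. c j \<in> subfield_of_size q"
    and "(\<Sum>j<n. c j * \<theta> ^ j) = 0"
  shows "\<forall>j<n. c j = 0"
proof -
  txt \<open>Since \<open>x \<mapsto> x ^ q\<close> is additive and fixes the \<open>c j\<close>, every conjugate of \<open>\<theta>\<close> is a root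
    of \<open>g\<close>; these are too many roots for its degree.\<close>
  define g where "g = (\<Sum>j<n. monom (c j) j)"
  have poly_g: "poly g x = (\<Sum>j<n. c j * x ^ j)" for x
    by (simp add: g_def poly_sum poly_monom)
  have roots: "poly g (\<theta> ^ (q ^ i)) = 0" for i
  proof -
    have "poly g (\<theta> ^ (q ^ i)) = (\<Sum>j<n. (c j * \<theta> ^ j) ^ (q ^ i))"
      unfolding poly_g using assms(4)
      by (intro sum.cong) (simp_all add: power_mult_distrib subfield_of_size_power_power
          flip: power_mult add: mult.commute)
    also have "\<dots> = (\<Sum>j<n. c j * \<theta> ^ j) ^ (q ^ i)"
      by (rule freshmans_dream_sum'[OF assms(1), where n = "e * i", symmetric]) (simp add: assms(2) power_mult)
    finally show ?thesis
      using assms(5) prime_gt_0_nat[OF assms(1)] by (simp add: assms(2))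
  qed
  have "g = 0"
  proof (rule ccontr)
    assume "g \<noteq> 0"
    have "n = card ((\<lambda>i. \<theta> ^ (q ^ i)) ` {..<n})"
      using assms(3) by (simp add: card_image)
    also have "\<dots> \<le> card {x. poly g x = 0}"
      using roots \<open>g \<noteq> 0\<close> by (intro card_mono poly_roots_finite) auto
    also have "\<dots> \<le> degree g"
      using \<open>g \<noteq> 0\<close> by (rule card_poly_roots_bound)
    also have "degree g \<le> n - 1"
      unfolding g_def by (intro degree_sum_le) (auto intro: order.trans[OF degree_monom_le])
    finally show False
      using \<open>g \<noteq> 0\<close> by (cases n) (simp_all add: g_def)
  qed
  have "coeff g j = c j" if "j < n" for j
    using that by (simp add: g_def coeff_sum coeff_monom)
  with \<open>g = 0\<close> show ?thesis
    by simp
qed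

section \<open>Computations in monoid algebras\<close>

lemma single_sum:
  "Poly_Mapping.single k (\<Sum>i\<in>A. f i) = (\<Sum>i\<in>A. Poly_Mapping.single k (f i))"
  by (induction A rule: infinite_finite_induct) (simp_all add: single_add)

lemma prod_single:
  fixes h :: "'i \<Rightarrow> 'a::comm_monoid_add" and v :: "'i \<Rightarrow> 'b::comm_semiring_1"
  assumes "finite I"
  shows "(\<Prod>i\<in>I. Poly_Mapping.single (h i) (v i)) = Poly_Mapping.single (\<Sum>i\<in>I. h i) (\<Prod>i\<in>I. v i)"
  using assms by (induction I rule: finite_induct) (simp_all add: mult_single)

lemma lookup_sum_single:
  "Poly_Mapping.lookup (\<Sum>i\<in>A. Poly_Mapping.single (h i) (v i)) x = (\<Sum>i\<in>A. if h i = x then v i else 0)"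
  by (simp add: lookup_sum lookup_single when_def)

lemma lookup_of_nat_mult:
  "Poly_Mapping.lookup (of_nat n * p) x = of_nat n * Poly_Mapping.lookup p x"
  by (simp flip: single_of_nat mult_map_scale_conv_mult add: map.rep_eq when_def)

lemma lookup_prod_sum_single:
  fixes w :: "'i \<Rightarrow> 'a::ring" and v :: "'i \<Rightarrow> 'a \<Rightarrow> 'b::comm_semiring_1"
  assumes "finite I" and "finite F"
    and inj: "inj_on (\<lambda>g. \<Sum>i\<in>I. g i * w i) (PiE I (\<lambda>_. F))"
    and g: "g \<in> PiE I (\<lambda>_. F)"
  shows "Poly_Mapping.lookup (\<Prod>i\<in>I. \<Sum>c\<in>F. Poly_Mapping.single (c * w i) (v i c)) (\<Sum>i\<in>I. g i * w i)
    = (\<Prod>i\<in>I. v i (g i))"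
proof -
  have "(\<Prod>i\<in>I. \<Sum>c\<in>F. Poly_Mapping.single (c * w i) (v i c))
      = (\<Sum>g'\<in>PiE I (\<lambda>_. F). Poly_Mapping.single (\<Sum>i\<in>I. g' i * w i) (\<Prod>i\<in>I. v i (g' i)))"
    using assms(1,2) by (simp add: prod_sum_PiE prod_single)
  moreover have "(\<Sum>i\<in>I. g' i * w i) = (\<Sum>i\<in>I. g i * w i) \<longleftrightarrow> g' = g"
    if "g' \<in> PiE I (\<lambda>_. F)" for g'
    using inj_onD[OF inj _ that g] by blast
  ultimately show ?thesis
    using g assms(1,2) by (simp add: lookup_sum_single sum.delta finite_PiE cong: sum.cong)
qed

lemma power_sum_single_eq_sum_lists:
  fixes f :: "'a::finite \<Rightarrow> 'm::comm_monoid_add"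
  shows "(\<Sum>x\<in>UNIV. Poly_Mapping.single (f x) (1::'b::comm_semiring_1)) ^ s
    = (\<Sum>xs\<in>{xs. length xs = s}. Poly_Mapping.single (\<Sum>x\<leftarrow>xs. f x) 1)"
proof (induction s)
  case 0
  have "{xs :: 'a list. length xs = 0} = {[]}"
    by auto
  then show ?case
    by simp
next
  case (Suc s)
  have "(\<Sum>x\<in>UNIV. Poly_Mapping.single (f x) (1::'b)) ^ Suc s
      = (\<Sum>(x, xs)\<in>UNIV \<times> {xs. length xs = s}. Poly_Mapping.single (f x + (\<Sum>y\<leftarrow>xs. f y)) 1)"
    by (simp add: Suc.IH sum_product mult_single sum.cartesian_product)
  also have "\<dots> = (\<Sum>xs\<in>{xs. length xs = Suc s}. Poly_Mapping.single (\<Sum>x\<leftarrow>xs. f x) 1)"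
    by (rule sum.reindex_bij_witness[of _ "\<lambda>ys. (hd ys, tl ys)" "\<lambda>(x, xs). x # xs"])
      (auto simp: length_Suc_conv)
  finally show ?case .
qed

lemma card_lists_sum_eq_lookup_power:
  fixes f :: "'a::finite \<Rightarrow> 'm::comm_monoid_add"
  shows "of_nat (card {xs. length xs = s \<and> (\<Sum>x\<leftarrow>xs. f x) = y})
    = Poly_Mapping.lookup ((\<Sum>x\<in>UNIV. Poly_Mapping.single (f x) (1::'b::comm_semiring_1)) ^ s) y"
proof -
  have "finite {xs :: 'a list. length xs = s}"
    using finite_lists_length_eq[of "UNIV :: 'a set" s] by simp
  then show ?thesis
    by (simp add: power_sum_single_eq_sum_lists lookup_sum_single sum.If_cases Int_def conj_commute)
qed

section \<open>The multinomial theorem\<close>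

lemma prod_fun_upd_atLeastAtMost_Suc:
  "(\<Prod>i=1..Suc m. f i ((rs(Suc m := t)) i)) = (\<Prod>i=1..m. f i (rs i)) * (f (Suc m) t :: 'b::comm_monoid_mult)"
proof -
  have "(\<Prod>i=1..m. f i ((rs(Suc m := t)) i)) = (\<Prod>i=1..m. f i (rs i))"
    by (rule prod.cong) auto
  then show ?thesis
    by simp
qed

lemma sum_fun_upd_atLeastAtMost_Suc:
  "(\<Sum>i=1..Suc m. (rs(Suc m := t)) i) = (\<Sum>i=1..m. rs i) + (t :: 'b::comm_monoid_add)"
proof -
  have "(\<Sum>i=1..m. (rs(Suc m := t)) i) = (\<Sum>i=1..m. rs i)"
    by (rule sum.cong) auto
  then show ?thesis
    by simp
qed

lemma compositions_0: "compositions 0 r = (if r = 0 then {\<lambda>_. 0} else {})"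
  by (auto simp: compositions_def)

lemma bij_betw_compositions_Suc:
  "bij_betw (\<lambda>(t, rs). rs(Suc m := t)) (SIGMA t:{..r}. compositions m (r - t)) (compositions (Suc m) r)"
proof (rule bij_betw_byWitness[where f' = "\<lambda>rs. (rs (Suc m), rs(Suc m := 0))"])
  show "\<forall>x\<in>SIGMA t:{..r}. compositions m (r - t). (\<lambda>rs. (rs (Suc m), rs(Suc m := 0))) ((\<lambda>(t, rs). rs(Suc m := t)) x) = x"
    by (auto simp: compositions_def)
  show "(\<lambda>(t, rs). rs(Suc m := t)) ` (SIGMA t:{..r}. compositions m (r - t)) \<subseteq> compositions (Suc m) r"
    by (auto simp: compositions_def sum_fun_upd_atLeastAtMost_Suc)
  show "(\<lambda>rs. (rs (Suc m), rs(Suc m := 0))) ` compositions (Suc m) r \<subseteq> (SIGMA t:{..r}. compositions m (r - t))"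
  proof (rule image_subsetI)
    fix rs assume rs: "rs \<in> compositions (Suc m) r"
    have "(\<Sum>i=1..Suc m. rs i) = (\<Sum>i=1..m. (rs(Suc m := 0)) i) + rs (Suc m)"
      using sum_fun_upd_atLeastAtMost_Suc[where rs = "rs(Suc m := 0)" and t = "rs (Suc m)"] by simp
    with rs show "(rs (Suc m), rs(Suc m := 0)) \<in> (SIGMA t:{..r}. compositions m (r - t))"
      by (auto simp: compositions_def)
  qed
qed auto

lemma finite_compositions: "finite (compositions m r)"
proof (induction m arbitrary: r)
  case (Suc m)
  then show ?case
    using bij_betw_finite[OF bij_betw_compositions_Suc] by blast
qed (simp add: compositions_0)

lemma prod_fact_dvd_fact:
  "rs \<in> compositions m r \<Longrightarrow> (\<Prod>i=1..m. fact (rs i)) dvd (fact r :: nat)"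
proof (induction m arbitrary: r rs)
  case 0
  then show ?case
    by simp
next
  case (Suc m)
  have "rs \<in> (\<lambda>(t, rs). rs(Suc m := t)) ` (SIGMA t:{..r}. compositions m (r - t))"
    using Suc.prems bij_betw_compositions_Suc[of m r] by (simp add: bij_betw_def)
  then obtain t rs' where "t \<le> r" "rs' \<in> compositions m (r - t)" "rs = rs'(Suc m := t)"
    by auto
  moreover have "fact (r - t) * fact t dvd (fact r :: nat)"
    using fact_fact_dvd_fact[of "r - t" t] \<open>t \<le> r\<close> by simp
  ultimately show ?case
    using Suc.IH by (auto simp: prod_fun_upd_atLeastAtMost_Suc intro: dvd_trans mult_dvd_mono)
qed

lemma choose_mult_div_prod_fact:
  assumes "t \<le> r" and "rs \<in> compositions m (r - t)"
  shows "(r choose t) * (fact (r - t) div (\<Prod>i=1..m. fact (rs i)))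
    = fact r div ((\<Prod>i=1..m. fact (rs i)) * fact t)"
proof -
  let ?P = "\<Prod>i=1..m. fact (rs i) :: nat"
  obtain c where c: "fact (r - t) = ?P * c"
    using prod_fact_dvd_fact[OF assms(2)] by blast
  have "?P > 0"
    by simp
  moreover have "fact r = (?P * fact t) * ((r choose t) * c)"
    using binomial_fact_lemma[OF assms(1)] c by (simp add: algebra_simps)
  ultimately show ?thesis
    using c by simp
qed

theorem multinomial_theorem:
  fixes x :: "nat \<Rightarrow> 'b::comm_semiring_1"
  shows "(\<Sum>i=1..m. x i) ^ r = (\<Sum>rs\<in>compositions m r.
     of_nat (fact r div (\<Prod>i=1..m. fact (rs i))) * (\<Prod>i=1..m. x i ^ rs i))"
proof (induction m arbitrary: r)
  case 0
  then show ?case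
    by (simp add: compositions_0 power_0_left)
next
  case (Suc m)
  define M where "M rs = of_nat (fact r div (\<Prod>i=1..Suc m. fact (rs i))) * (\<Prod>i=1..Suc m. x i ^ rs i)"
    for rs
  have "(\<Sum>i=1..Suc m. x i) ^ r = (x (Suc m) + (\<Sum>i=1..m. x i)) ^ r"
    by (simp add: add.commute)
  also have "\<dots> = (\<Sum>t\<le>r. of_nat (r choose t) * x (Suc m) ^ t * (\<Sum>i=1..m. x i) ^ (r - t))"
    by (rule binomial_ring)
  also have "\<dots> = (\<Sum>t\<le>r. \<Sum>rs\<in>compositions m (r - t). M (rs(Suc m := t)))"
    unfolding Suc.IH sum_distrib_left
  proof (rule sum.cong[OF refl], rule sum.cong[OF refl])
    fix t rs assume "t \<in> {..r}" and rs: "rs \<in> compositions m (r - t)"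
    then have coeff: "of_nat (r choose t) * of_nat (fact (r - t) div (\<Prod>i=1..m. fact (rs i)))
        = (of_nat (fact r div ((\<Prod>i=1..m. fact (rs i)) * fact t)) :: 'b)"
      using choose_mult_div_prod_fact[of t r rs m] by (simp flip: of_nat_mult)
    show "of_nat (r choose t) * x (Suc m) ^ t *
        (of_nat (fact (r - t) div (\<Prod>i=1..m. fact (rs i))) * (\<Prod>i=1..m. x i ^ rs i))
        = M (rs(Suc m := t))"
      unfolding M_def prod_fun_upd_atLeastAtMost_Suc[where f = "\<lambda>_. fact"]
        prod_fun_upd_atLeastAtMost_Suc[where f = "\<lambda>i. (^) (x i)"] coeff[symmetric]
      by (simp only: mult_ac)
  qed
  also have "\<dots> = (\<Sum>p\<in>(SIGMA t:{..r}. compositions m (r - t)). M ((\<lambda>(t, rs). rs(Suc m := t)) p))"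
    by (subst sum.Sigma) (auto simp: finite_compositions intro!: sum.cong)
  also have "\<dots> = sum M (compositions (Suc m) r)"
    by (rule sum.reindex_bij_betw[OF bij_betw_compositions_Suc])
  finally show ?case
    by (simp add: M_def)
qed

lemma real_multinomial_coeff:
  assumes "rs \<in> compositions m r"
  shows "real (fact r div (\<Prod>i=1..m. fact (rs i))) = fact r / (\<Prod>i=1..m. fact (rs i))"
  using prod_fact_dvd_fact[OF assms] by (simp add: real_of_nat_div)

section \<open>Sums of nonzero elements of a finite additive group\<close>

lemma a_coef_eq:
  assumes "q > 1"
  shows "a_coef q z t = ((real q - 1) ^ t - (-1) ^ t) / q + (if z then (-1) ^ t else 0)"
proof (cases "z \<and> t = 0")
  case True
  have "(real q - 1) powi (-1) = 1 / (real q - 1)"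
    by (simp add: power_int_minus divide_inverse)
  then show ?thesis
    using True assms by (simp add: a_coef_def field_simps)
next
  case False
  then consider "\<not> z" | t' where "z" "t = Suc t'"
    using not0_implies_Suc by blast
  then show ?thesis
  proof cases
    case 1
    then show ?thesis
      by (simp add: a_coef_def power_int_of_nat)
  next
    case 2
    then have "int t - 1 = int t'"
      by simp
    then show ?thesis
      using 2 assms by (simp add: a_coef_def power_int_of_nat field_simps)
  qed
qed

lemma sum_a_coef:
  assumes "finite F" and "0 \<in> F" and "card F = q" and "q > 1"
  shows "(\<Sum>c\<in>F. a_coef q (c = 0) t) = (real q - 1) ^ t"
  using assms by (simp add: a_coef_eq sum.distrib sum.delta)

lemma sum_a_coef_diff_nonzero:
  fixes F :: "'a::ab_group_add set"
  assumes "finite F" and "0 \<in> F" and "\<forall>x\<in>F. \<forall>y\<in>F. x - y \<in> F" and "card F = q" and "q > 1"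
    and "e \<in> F"
  shows "(\<Sum>d\<in>F - {0}. a_coef q (e - d = 0) t) = a_coef q (e = 0) (Suc t)"
proof -
  have "(\<Sum>d\<in>F - {0}. a_coef q (e - d = 0) t) = (\<Sum>c\<in>F - {e}. a_coef q (c = 0) t)"
    by (rule sum.reindex_bij_witness[of _ "\<lambda>c. e - c" "\<lambda>d. e - d"]) (use assms(3,6) in auto)
  also have "\<dots> = (real q - 1) ^ t - a_coef q (e = 0) t"
    using assms by (simp add: sum_diff1 sum_a_coef)
  also have "\<dots> = a_coef q (e = 0) (Suc t)"
    using assms(5) by (simp add: a_coef_eq field_simps)
  finally show ?thesis .
qed

lemma power_sum_single_nonzero_multiples:
  fixes F :: "'a::ring set"
  assumes "finite F" and "0 \<in> F" and "\<forall>x\<in>F. \<forall>y\<in>F. x - y \<in> F" and "card F = q" and "q > 1"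
  shows "(\<Sum>c\<in>F - {0}. Poly_Mapping.single (c * w) (1::real)) ^ t
    = (\<Sum>c\<in>F. Poly_Mapping.single (c * w) (a_coef q (c = 0) t))"
proof (induction t)
  case 0
  show ?case
    using assms by (simp add: a_coef_eq sum.delta if_distrib[of "Poly_Mapping.single _"] cong: if_cong)
next
  case (Suc t)
  have add_closed: "x + y \<in> F" if "x \<in> F" "y \<in> F" for x y
    using assms(2,3) that by (metis diff_0 diff_minus_eq_add)
  have "(\<Sum>c\<in>F - {0}. Poly_Mapping.single (c * w) (1::real)) ^ Suc t
      = (\<Sum>d\<in>F - {0}. \<Sum>c\<in>F. Poly_Mapping.single (d * w + c * w) (a_coef q (c = 0) t))"
    by (simp add: Suc.IH sum_product mult_single)
  also have "\<dots> = (\<Sum>d\<in>F - {0}. \<Sum>e\<in>F. Poly_Mapping.single (e * w) (a_coef q (e - d = 0) t))"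
  proof (rule sum.cong[OF refl])
    fix d assume d: "d \<in> F - {0}"
    show "(\<Sum>c\<in>F. Poly_Mapping.single (d * w + c * w) (a_coef q (c = 0) t))
        = (\<Sum>e\<in>F. Poly_Mapping.single (e * w) (a_coef q (e - d = 0) t))"
      by (rule sum.reindex_bij_witness[of _ "\<lambda>e. e - d" "\<lambda>c. d + c"])
        (use assms(3) add_closed d in \<open>auto simp: distrib_right\<close>)
  qed
  also have "\<dots> = (\<Sum>e\<in>F. Poly_Mapping.single (e * w) (\<Sum>d\<in>F - {0}. a_coef q (e - d = 0) t))"
    by (simp add: single_sum sum.swap[of _ "F - {0}"])
  also have "\<dots> = (\<Sum>e\<in>F. Poly_Mapping.single (e * w) (a_coef q (e = 0) (Suc t)))"
    using sum_a_coef_diff_nonzero[OF assms] by simp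
  finally show ?case .
qed

section \<open>The image of the \<open>k\<close>-th power map\<close>

lemma sum_lessThan_mult_mod:
  "(\<Sum>n<k * u. h (n mod u)) = of_nat k * (\<Sum>i<u. h i :: 'b::semiring_1)"
proof -
  have "(\<Sum>n<k * u. h (n mod u)) = (\<Sum>j<k. \<Sum>n\<in>{j * u..<j * u + u}. h (n mod u))"
    by (rule sum.nat_group[symmetric])
  also have "\<dots> = (\<Sum>j<k. \<Sum>i<u. h i)"
  proof (rule sum.cong[OF refl])
    fix j
    have "(\<Sum>n\<in>{0 + j * u..<u + j * u}. h (n mod u)) = (\<Sum>i\<in>{0..<u}. h ((i + j * u) mod u))"
      by (rule sum.shift_bounds_nat_ivl)
    then show "(\<Sum>n\<in>{j * u..<j * u + u}. h (n mod u)) = (\<Sum>i<u. h i)"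
      by (simp add: add.commute atLeast0LessThan)
  qed
  finally show ?thesis
    by simp
qed

lemma sum_single_power_nonzero:
  fixes \<omega> :: "'a::{finite,field}"
  assumes "primitive_elem \<omega>" and "CARD('a) - 1 = k * u"
  shows "(\<Sum>x\<in>UNIV - {0}. Poly_Mapping.single (x ^ k) (1::'b::semiring_1))
    = of_nat k * (\<Sum>i<u. Poly_Mapping.single (\<omega> ^ (i * k)) 1)"
proof -
  have "(\<omega> ^ n) ^ k = \<omega> ^ ((n mod u) * k)" for n
    using assms(2) by (simp add: primitive_elem_power_eq_iff[OF assms(1)] mult_mod_left
        flip: power_mult)
  then have "(\<Sum>x\<in>UNIV - {0}. Poly_Mapping.single (x ^ k) (1::'b))
      = (\<Sum>n<k * u. Poly_Mapping.single (\<omega> ^ ((n mod u) * k)) 1)"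
    using sum.reindex_bij_betw[OF primitive_elem_bij_betw[OF assms(1)],
        of "\<lambda>x. Poly_Mapping.single (x ^ k) (1::'b)"] assms(2) by simp
  also have "\<dots> = of_nat k * (\<Sum>i<u. Poly_Mapping.single (\<omega> ^ (i * k)) 1)"
    by (rule sum_lessThan_mult_mod)
  finally show ?thesis .
qed

lemma sum_single_primitive_powers_split:
  fixes \<omega> :: "'a::{finite,field}"
  assumes "primitive_elem \<omega>" and "q > 1" and "CARD('a) - 1 = k * (b * (q - 1))"
  shows "(\<Sum>m<b * (q - 1). Poly_Mapping.single (\<omega> ^ (m * k)) (1::'b::semiring_1))
    = (\<Sum>i<b. \<Sum>c\<in>subfield_of_size q - {0}. Poly_Mapping.single (c * \<omega> ^ (i * k)) 1)"
proof -
  have "(q - 1) dvd (CARD('a) - 1)" and m: "(CARD('a) - 1) div (q - 1) = k * b"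
    using assms(2,3) by simp_all
  note bij = subfield_of_size_nonzero_bij_betw[OF assms(1,2) this(1), unfolded m]
  have "(\<Sum>m<b * (q - 1). Poly_Mapping.single (\<omega> ^ (m * k)) (1::'b))
      = (\<Sum>j<q - 1. \<Sum>m\<in>{j * b..<j * b + b}. Poly_Mapping.single (\<omega> ^ (m * k)) 1)"
    by (simp add: sum.nat_group mult.commute)
  also have "\<dots> = (\<Sum>j<q - 1. \<Sum>i<b. Poly_Mapping.single (\<omega> ^ (k * b * j) * \<omega> ^ (i * k)) 1)"
  proof (rule sum.cong[OF refl])
    fix j
    have "(\<Sum>m\<in>{0 + j * b..<b + j * b}. Poly_Mapping.single (\<omega> ^ (m * k)) (1::'b))
        = (\<Sum>i\<in>{0..<b}. Poly_Mapping.single (\<omega> ^ ((i + j * b) * k)) 1)"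
      by (rule sum.shift_bounds_nat_ivl)
    then show "(\<Sum>m\<in>{j * b..<j * b + b}. Poly_Mapping.single (\<omega> ^ (m * k)) (1::'b))
        = (\<Sum>i<b. Poly_Mapping.single (\<omega> ^ (k * b * j) * \<omega> ^ (i * k)) 1)"
      by (simp add: add.commute atLeast0LessThan algebra_simps flip: power_add)
  qed
  also have "\<dots> = (\<Sum>i<b. \<Sum>j<q - 1. Poly_Mapping.single (\<omega> ^ (k * b * j) * \<omega> ^ (i * k)) 1)"
    by (rule sum.swap)
  also have "\<dots> = (\<Sum>i<b. \<Sum>c\<in>subfield_of_size q - {0}. Poly_Mapping.single (c * \<omega> ^ (i * k)) 1)"
    by (rule sum.cong[OF refl], rule sum.reindex_bij_betw[OF bij])
  finally show ?thesis .
qed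

locale primitive_divisor_field =
  fixes p a b :: nat and \<omega> :: "'a::{finite,field}" and q k :: nat
  assumes prime: "prime p" and a_pos: "a > 0" and b_gt_1: "b > 1"
    and card_eq: "CARD('a) = p ^ (a * b)"
    and dvd_card: "(b * (p ^ a - 1)) dvd (p ^ (a * b) - 1)"
    and primitive_divisor: "primitive_divisor (b * (p ^ a - 1)) p (a * b)"
    and primitive: "primitive_elem \<omega>"
    and q_def: "q = p ^ a"
    and k_def: "k = (p ^ (a * b) - 1) div (b * (p ^ a - 1))"
begin

abbreviation F :: "'a set" where "F \<equiv> subfield_of_size q"

abbreviation basis :: "nat \<Rightarrow> 'a" where "basis i \<equiv> \<omega> ^ ((i - 1) * k)"

abbreviation \<nu> :: "nat \<Rightarrow> 'a \<Rightarrow>\<^sub>0 real" where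
  "\<nu> i \<equiv> \<Sum>c\<in>F - {0}. Poly_Mapping.single (c * basis i) 1"

lemma q_gt_1: "q > 1"
  using one_less_power[of p a] prime_gt_1_nat[OF prime] a_pos by (simp add: q_def)

lemma card_minus_one_eq: "CARD('a) - 1 = k * (b * (q - 1))"
  using dvd_card by (simp add: card_eq k_def q_def)

lemma card_eq_q_power: "CARD('a) = q ^ b"
  by (simp add: card_eq q_def power_mult)

lemma k_pos: "k > 0"
  using card_minus_one_eq finite_field_card_gt_one[where 'a='a] by (cases k) auto

lemma CHAR_eq: "CHAR('a) = p"
  by (rule CHAR_eq_if_card_eq_prime_power[OF prime card_eq])

lemma card_F: "card F = q"
  using card_subfield_of_size[OF primitive q_gt_1] card_minus_one_eq by simp

lemma zero_in_F: "0 \<in> F"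
  using q_gt_1 by (simp add: subfield_of_size_zero)

lemma diff_in_F: "\<forall>x\<in>F. \<forall>y\<in>F. x - y \<in> F"
  using subfield_of_size_diff[where 'a='a and q=q and e=a] prime by (simp add: CHAR_eq q_def)

lemma conjugate_powers_neq:
  assumes "i < j" and "j < b"
  shows "\<omega> ^ (k * q ^ i) \<noteq> \<omega> ^ (k * q ^ j)"
proof
  let ?u = "b * (q - 1)"
  assume "\<omega> ^ (k * q ^ i) = \<omega> ^ (k * q ^ j)"
  then have "(k * q ^ j) mod (CARD('a) - 1) = (k * q ^ i) mod (CARD('a) - 1)"
    using primitive_elem_power_eq_iff[OF primitive] by metis
  moreover have "k * q ^ i \<le> k * q ^ j"
    using assms q_gt_1 by simp
  ultimately have "k * ?u dvd k * q ^ j - k * q ^ i"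
    by (simp only: mod_eq_dvd_iff_nat card_minus_one_eq)
  moreover have "k * q ^ j - k * q ^ i = k * (q ^ i * (q ^ (j - i) - 1))"
    using assms(1) by (simp add: diff_mult_distrib2 flip: power_add)
  ultimately have "?u dvd q ^ i * (q ^ (j - i) - 1)"
    using k_pos by simp
  moreover have "coprime ?u q"
  proof -
    have "coprime (p ^ (a * b) - 1) p"
      using coprime_diff_one_left_nat[of "p ^ (a * b)"] prime a_pos b_gt_1
      by (simp add: prime_gt_0_nat)
    then have "coprime (b * (p ^ a - 1)) p"
      using coprime_divisors[OF dvd_card dvd_refl] by blast
    then show ?thesis
      by (simp add: q_def)
  qed
  ultimately have "b * (p ^ a - 1) dvd p ^ (a * (j - i)) - 1"
    by (simp add: coprime_dvd_mult_right_iff q_def power_mult)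
  moreover have "1 \<le> a * (j - i)" and "a * (j - i) < a * b"
    using assms a_pos by simp_all
  ultimately show False
    using primitive_divisor by (auto simp: primitive_divisor_def)
qed

lemma basis_coeffs_eq_zero:
  assumes "\<forall>j<b. c j \<in> F" and "(\<Sum>j<b. c j * \<omega> ^ (j * k)) = 0"
  shows "\<forall>j<b. c j = 0"
proof (rule coeffs_eq_zero_if_conjugates_distinct)
  show "inj_on (\<lambda>i. (\<omega> ^ k) ^ (q ^ i)) {..<b}"
    by (rule linorder_inj_onI) (auto simp: conjugate_powers_neq simp flip: power_mult)
  show "(\<Sum>j<b. c j * (\<omega> ^ k) ^ j) = 0"
    using assms(2) by (simp add: mult.commute flip: power_mult)
qed (use assms(1) prime in \<open>simp_all add: CHAR_eq q_def\<close>)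

lemma sum_basis_eq: "(\<Sum>i=1..b. g i * basis i) = (\<Sum>j<b. g (Suc j) * \<omega> ^ (j * k))"
  by (simp add: sum.atLeast1_atMost_eq)

lemma inj_on_sum_basis: "inj_on (\<lambda>g. \<Sum>i=1..b. g i * basis i) (PiE {1..b} (\<lambda>_. F))"
proof (rule inj_onI)
  fix g h assume g: "g \<in> PiE {1..b} (\<lambda>_. F)" and h: "h \<in> PiE {1..b} (\<lambda>_. F)"
    and eq: "(\<Sum>i=1..b. g i * basis i) = (\<Sum>i=1..b. h i * basis i)"
  have "(\<Sum>j<b. (g (Suc j) - h (Suc j)) * \<omega> ^ (j * k)) = 0"
    using eq unfolding sum_basis_eq by (simp add: left_diff_distrib sum_subtractf)
  moreover have "\<forall>j<b. g (Suc j) - h (Suc j) \<in> F"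
    using PiE_mem[OF g] PiE_mem[OF h] diff_in_F by simp
  ultimately have "\<forall>j<b. g (Suc j) - h (Suc j) = 0"
    using basis_coeffs_eq_zero[of "\<lambda>j. g (Suc j) - h (Suc j)"] by blast
  then have "\<forall>j<b. g (Suc j) = h (Suc j)"
    by simp
  have "g i = h i" if "i \<in> {1..b}" for i
  proof -
    have "i = Suc (i - 1)" and "i - 1 < b"
      using that by auto
    with \<open>\<forall>j<b. g (Suc j) = h (Suc j)\<close> show ?thesis
      by metis
  qed
  then show "g = h"
    by (rule PiE_ext[OF g h])
qed

lemma range_sum_basis: "(\<lambda>g. \<Sum>i=1..b. g i * basis i) ` PiE {1..b} (\<lambda>_. F) = UNIV"
proof (rule card_subset_eq)
  have "card (PiE {1..b} (\<lambda>_. F)) = CARD('a)"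
    by (simp add: card_PiE card_F card_eq_q_power)
  then show "card ((\<lambda>g. \<Sum>i=1..b. g i * basis i) ` PiE {1..b} (\<lambda>_. F)) = CARD('a)"
    unfolding card_image[OF inj_on_sum_basis] .
qed simp_all

lemma bracket_eq:
  assumes g: "g \<in> PiE {1..b} (\<lambda>_. F)" and \<alpha>: "(\<Sum>i=1..b. g i * basis i) = \<alpha>"
    and i: "i \<in> {1..b}"
  shows "bracket q b k \<omega> \<alpha> i = g i"
proof -
  define c where "c j = (if j < b then g (Suc j) else 0)" for j
  have "coords q b k \<omega> \<alpha> = c"
    unfolding coords_def
  proof (rule the_equality)
    show "(\<forall>j<b. c j \<in> F) \<and> (\<forall>j\<ge>b. c j = 0) \<and> \<alpha> = (\<Sum>j<b. c j * \<omega> ^ (j * k))"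
      using g \<alpha> unfolding sum_basis_eq by (auto simp: c_def)
  next
    fix c' assume c': "(\<forall>j<b. c' j \<in> F) \<and> (\<forall>j\<ge>b. c' j = 0) \<and> \<alpha> = (\<Sum>j<b. c' j * \<omega> ^ (j * k))"
    have "(\<Sum>j<b. (c' j - c j) * \<omega> ^ (j * k)) = 0"
      using c' \<alpha> unfolding sum_basis_eq by (simp add: c_def left_diff_distrib sum_subtractf)
    moreover have "\<forall>j<b. c' j - c j \<in> F"
      using c' PiE_mem[OF g] diff_in_F by (simp add: c_def)
    ultimately have "\<forall>j<b. c' j - c j = 0"
      using basis_coeffs_eq_zero[of "\<lambda>j. c' j - c j"] by blast
    then show "c' = c"
      using c' by (auto simp: c_def not_less)
  qed
  then show ?thesis
    using i by (auto simp: bracket_def c_def)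
qed

lemma sum_single_power_eq:
  "(\<Sum>x\<in>UNIV. Poly_Mapping.single (x ^ k) 1) = 1 + of_nat k * (\<Sum>i=1..b. \<nu> i)"
proof -
  have "(\<Sum>x\<in>UNIV. Poly_Mapping.single (x ^ k) (1::real))
      = Poly_Mapping.single ((0::'a) ^ k) 1 + (\<Sum>x\<in>UNIV - {0}. Poly_Mapping.single (x ^ k) 1)"
    by (rule sum.remove) simp_all
  also have "Poly_Mapping.single ((0::'a) ^ k) (1::real) = 1"
    using k_pos by (simp add: zero_power)
  also have "(\<Sum>x\<in>UNIV - {0}. Poly_Mapping.single (x ^ k) (1::real))
      = of_nat k * (\<Sum>i<b. \<Sum>c\<in>F - {0}. Poly_Mapping.single (c * \<omega> ^ (i * k)) 1)"
    unfolding sum_single_power_nonzero[OF primitive card_minus_one_eq]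
      sum_single_primitive_powers_split[OF primitive q_gt_1 card_minus_one_eq] ..
  also have "(\<Sum>i<b. \<Sum>c\<in>F - {0}. Poly_Mapping.single (c * \<omega> ^ (i * k)) (1::real))
      = (\<Sum>i=1..b. \<nu> i)"
    by (simp add: sum.atLeast1_atMost_eq)
  finally show ?thesis .
qed

lemma lookup_prod_power_\<nu>:
  "Poly_Mapping.lookup (\<Prod>i=1..b. \<nu> i ^ rs i) \<alpha> = (\<Prod>i=1..b. a_coef q (bracket q b k \<omega> \<alpha> i = 0) (rs i))"
proof -
  have "\<alpha> \<in> (\<lambda>g. \<Sum>i=1..b. g i * basis i) ` PiE {1..b} (\<lambda>_. F)"
    by (simp only: range_sum_basis UNIV_I)
  then obtain g where g: "g \<in> PiE {1..b} (\<lambda>_. F)" and \<alpha>: "\<alpha> = (\<Sum>i=1..b. g i * basis i)"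
    by blast
  have "Poly_Mapping.lookup (\<Prod>i=1..b. \<nu> i ^ rs i) \<alpha>
      = Poly_Mapping.lookup (\<Prod>i=1..b. \<Sum>c\<in>F. Poly_Mapping.single (c * basis i) (a_coef q (c = 0) (rs i))) \<alpha>"
    by (simp add: power_sum_single_nonzero_multiples[OF _ zero_in_F diff_in_F card_F q_gt_1])
  also have "\<dots> = (\<Prod>i=1..b. a_coef q (g i = 0) (rs i))"
    unfolding \<alpha> by (rule lookup_prod_sum_single[OF _ _ inj_on_sum_basis g]) simp_all
  also have "\<dots> = (\<Prod>i=1..b. a_coef q (bracket q b k \<omega> \<alpha> i = 0) (rs i))"
    using bracket_eq[OF g \<alpha>[symmetric]] by simp
  finally show ?thesis .
qed

lemma lookup_power_eq_N_r:
  "Poly_Mapping.lookup ((of_nat k * (\<Sum>i=1..b. \<nu> i)) ^ r) \<alpha> = N_r q b k \<omega> \<alpha> r"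
proof -
  have "(of_nat k * (\<Sum>i=1..b. \<nu> i)) ^ r = of_nat (k ^ r) *
      (\<Sum>rs\<in>compositions b r. of_nat (fact r div (\<Prod>i=1..b. fact (rs i))) * (\<Prod>i=1..b. \<nu> i ^ rs i))"
    unfolding power_mult_distrib multinomial_theorem by simp
  then have "Poly_Mapping.lookup ((of_nat k * (\<Sum>i=1..b. \<nu> i)) ^ r) \<alpha>
      = real (k ^ r) * (\<Sum>rs\<in>compositions b r. real (fact r div (\<Prod>i=1..b. fact (rs i))) *
          (\<Prod>i=1..b. a_coef q (bracket q b k \<omega> \<alpha> i = 0) (rs i)))"
    by (simp only: lookup_of_nat_mult lookup_sum lookup_prod_power_\<nu> of_nat_id)
  also have "\<dots> = N_r q b k \<omega> \<alpha> r"
    unfolding N_r_def of_nat_power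
  proof (rule arg_cong[where f = "(*) (real k ^ r)"], rule sum.cong[OF refl])
    fix rs assume "rs \<in> compositions b r"
    then show "real (fact r div (\<Prod>i=1..b. fact (rs i))) * (\<Prod>i=1..b. a_coef q (bracket q b k \<omega> \<alpha> i = 0) (rs i))
        = fact r / (\<Prod>i=1..b. fact (rs i)) * (\<Prod>i=1..b. a_coef q (bracket q b k \<omega> \<alpha> i = 0) (rs i))"
      by (simp only: real_multinomial_coeff)
  qed
  finally show ?thesis .
qed

end

theorem theorem4p4:
  fixes p a b s :: nat and \<omega> \<alpha> :: "'a::{finite,field}"
  assumes "prime p" and "a > 0" and "b > 1"
    and "card (UNIV :: 'a set) = p ^ (a * b)"
    and "(b * (p ^ a - 1)) dvd (p ^ (a * b) - 1)"
    and "primitive_divisor (b * (p ^ a - 1)) p (a * b)"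
    and "primitive_elem \<omega>"
    and "s \<ge> 1"
  defines "k \<equiv> (p ^ (a * b) - 1) div (b * (p ^ a - 1))"
  shows "real (card {xs :: 'a list. length xs = s \<and> (\<Sum>x\<leftarrow>xs. x ^ k) = \<alpha>}) =
     (if \<alpha> \<noteq> 0 then (\<Sum>r=1..s. real (s choose r) * N_r (p ^ a) b k \<omega> \<alpha> r)
      else 1 + (\<Sum>r=1..s. real (s choose r) * N_r (p ^ a) b k \<omega> \<alpha> r))"
proof -
  interpret primitive_divisor_field p a b \<omega> "p ^ a" k
    by unfold_locales (use assms in \<open>simp_all add: k_def\<close>)
  define \<mu> where "\<mu> = of_nat k * (\<Sum>i=1..b. \<nu> i)"
  have "real (card {xs :: 'a list. length xs = s \<and> (\<Sum>x\<leftarrow>xs. x ^ k) = \<alpha>})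
      = Poly_Mapping.lookup ((\<mu> + 1) ^ s) \<alpha>"
    unfolding card_lists_sum_eq_lookup_power sum_single_power_eq \<mu>_def by (simp add: add.commute)
  also have "\<dots> = (\<Sum>r=0..s. real (s choose r) * N_r (p ^ a) b k \<omega> \<alpha> r)"
    by (simp add: binomial_ring lookup_sum lookup_of_nat_mult lookup_power_eq_N_r[folded \<mu>_def]
        atLeast0AtMost)
  also have "\<dots> = N_r (p ^ a) b k \<omega> \<alpha> 0 + (\<Sum>r=1..s. real (s choose r) * N_r (p ^ a) b k \<omega> \<alpha> r)"
    by (simp add: sum.atLeast_Suc_atMost)
  txt \<open>The term \<open>r = 0\<close> is \<open>[\<alpha> = 0]\<close>.\<close>
  also have "N_r (p ^ a) b k \<omega> \<alpha> 0 = Poly_Mapping.lookup 1 \<alpha>"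
    using lookup_power_eq_N_r[of 0 \<alpha>] by simp
  finally show ?thesis
    by (simp add: lookup_one when_def)
qed

end
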